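(* A finitely generated associative algebra $A$ is NC-complete if and only if it is Lie complete. Similarly, $A$ is NC-nilpotent if and only if it is Lie nilpotent.
   Context: $L_1=A$, $L_k=[A,L_{k-1}]$, $M_k=AL_kA$. The NC-filtration is $F_k=\sum_{m\ge1}\sum_{i_1+\cdots+i_m=k+m}M_{i_1}\cdots M_{i_m}$. $A$ is Lie complete (resp. NC-complete) if it is complete in the topology defined by the filtration $M_\bullet$ (resp. $F_\bullet$); $A$ is Lie nilpotent (resp. NC-nilpotent) if $M_N(A)=0$ (resp. $F_N(A)=0$) for some $N$. *)

theory Defs
  imports Complex_Main
begin

definition assoc_algebra :: "('k::field \<Rightarrow> 'a::ring_1 \<Rightarrow> 'a) \<Rightarrow> bool" where
  "assoc_algebra scale \<longleftrightarrow> vector_space scale \<and>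
     (\<forall>c x y. scale c (x * y) = scale c x * y) \<and>
     (\<forall>c x y. scale c (x * y) = x * scale c y)"

inductive_set gen_subalg :: "('k::field \<Rightarrow> 'a::ring_1 \<Rightarrow> 'a) \<Rightarrow> 'a set \<Rightarrow> 'a set"
  for scale :: "'k::field \<Rightarrow> 'a::ring_1 \<Rightarrow> 'a" and G :: "'a set" where
  gen: "g \<in> G \<Longrightarrow> g \<in> gen_subalg scale G"
| one: "1 \<in> gen_subalg scale G"
| add: "x \<in> gen_subalg scale G \<Longrightarrow> y \<in> gen_subalg scale G \<Longrightarrow> x + y \<in> gen_subalg scale G"
| mult: "x \<in> gen_subalg scale G \<Longrightarrow> y \<in> gen_subalg scale G \<Longrightarrow> x * y \<in> gen_subalg scale G"
| smult: "x \<in> gen_subalg scale G \<Longrightarrow> scale c x \<in> gen_subalg scale G"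

definition fin_gen_algebra :: "('k::field \<Rightarrow> 'a::ring_1 \<Rightarrow> 'a) \<Rightarrow> bool" where
  "fin_gen_algebra scale \<longleftrightarrow> (\<exists>G. finite G \<and> gen_subalg scale G = UNIV)"

text \<open>Lower central series: L_1 = A, L_(k+1) = [A, L_k] (k-span of commutators).
 Index 0 is unused and set to A.\<close>
primrec LCS :: "('k::field \<Rightarrow> 'a::ring_1 \<Rightarrow> 'a) \<Rightarrow> nat \<Rightarrow> 'a set" where
  "LCS scale 0 = UNIV"
| "LCS scale (Suc n) = (if n = 0 then UNIV
      else module.span scale {a * l - l * a | a l. l \<in> LCS scale n})"

definition Mser :: "('k::field \<Rightarrow> 'a::ring_1 \<Rightarrow> 'a) \<Rightarrow> nat \<Rightarrow> 'a set" where
  "Mser scale k = module.span scale {a * l * b | a l b. l \<in> LCS scale k}"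

text \<open>NC-filtration F_k = sum over m \<ge> 1 and i_1+...+i_m = k+m (all i_j \<ge> 1)
 of M_(i_1) ... M_(i_m); a product of subspaces is the span of products.\<close>
definition NCfilt :: "('k::field \<Rightarrow> 'a::ring_1 \<Rightarrow> 'a) \<Rightarrow> nat \<Rightarrow> 'a set" where
  "NCfilt scale k = module.span scale
     {prod_list xs | xs is. length is \<ge> 1 \<and> length xs = length is \<and>
        (\<forall>j \<in> set is. j \<ge> 1) \<and> sum_list is = k + length is \<and>
        (\<forall>j < length is. xs ! j \<in> Mser scale (is ! j))}"

text \<open>Completeness (and separatedness) with respect to a filtration F:
 the canonical map A \<rightarrow> lim A/F_k is bijective.\<close>
definition filt_complete :: "(nat \<Rightarrow> 'a::ring_1 set) \<Rightarrow> bool" where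
  "filt_complete F \<longleftrightarrow>
     (\<forall>x :: nat \<Rightarrow> 'a. (\<forall>k j. k \<le> j \<longrightarrow> x j - x k \<in> F k) \<longrightarrow>
        (\<exists>!a. \<forall>k. a - x k \<in> F k))"

definition Lie_complete :: "('k::field \<Rightarrow> 'a::ring_1 \<Rightarrow> 'a) \<Rightarrow> bool" where
  "Lie_complete scale \<longleftrightarrow> filt_complete (Mser scale)"

definition NC_complete :: "('k::field \<Rightarrow> 'a::ring_1 \<Rightarrow> 'a) \<Rightarrow> bool" where
  "NC_complete scale \<longleftrightarrow> filt_complete (NCfilt scale)"

definition Lie_nilpotent :: "('k::field \<Rightarrow> 'a::ring_1 \<Rightarrow> 'a) \<Rightarrow> bool" where
  "Lie_nilpotent scale \<longleftrightarrow> (\<exists>N. Mser scale N = {0})"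

definition NC_nilpotent :: "('k::field \<Rightarrow> 'a::ring_1 \<Rightarrow> 'a) \<Rightarrow> bool" where
  "NC_nilpotent scale \<longleftrightarrow> (\<exists>N. NCfilt scale N = {0})"

end

theory Submission
  imports Defs
begin

text \<open>Always M_(k+1) \<subseteq> F_k, as a single factor is a product. Conversely, for finitely generated A,
F_n \<subseteq> M_k once n is large: a product in F_n with no factor in M_k has many factors in M_2, and
M_2^(c+1) \<subseteq> M_3, where c is the number of commutators of generators. Indeed M_2 is the ideal
generated by these commutators and [x,y] z [x,y] \<in> M_3 (this is where char \<noteq> 2 enters);
together with M_(i+1) M_3 \<subseteq> M_(i+2) this yields high powers of M_2 in deep M_k. Two mutually
cofinal filtrations by subgroups have the same Cauchy sequences and limits, and one vanishes
iff the other does.\<close>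

lemma exists_mono_majorant:
  fixes f :: "nat \<Rightarrow> nat"
  obtains r where "mono r" and "\<And>k. f k \<le> r k"
proof
  show "mono (\<lambda>k. \<Sum>i\<le>k. f i)"
    by (rule monoI) (rule sum_mono2, auto)
  show "f k \<le> (\<Sum>i\<le>k. f i)" for k
    by (rule member_le_sum) auto
qed

lemma filt_complete_separated:
  fixes F :: "nat \<Rightarrow> 'a::ring_1 set"
  assumes "filt_complete F" and "\<And>k. 0 \<in> F k" and "\<And>k. x \<in> F k"
  shows "x = 0"
proof -
  have "(\<forall>k j. k \<le> j \<longrightarrow> (0::'a) - 0 \<in> F k) \<longrightarrow> (\<exists>!a. \<forall>k. a - 0 \<in> F k)"
    using assms(1) unfolding filt_complete_def by (rule spec)
  then have "\<exists>!a. \<forall>k. a \<in> F k" using assms(2) by simp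
  then show "x = 0" using assms(2,3) by blast
qed

lemma filt_complete_if_cofinal:
  fixes F M :: "nat \<Rightarrow> 'a::ring_1 set"
  assumes F_0: "\<And>k. 0 \<in> F k" and F_diff: "\<And>k x y. x \<in> F k \<Longrightarrow> y \<in> F k \<Longrightarrow> x - y \<in> F k"
    and M_0: "\<And>k. 0 \<in> M k"
    and F_M: "\<And>k. \<forall>\<^sub>F n in sequentially. F n \<subseteq> M k"
    and M_F: "\<And>k. \<forall>\<^sub>F n in sequentially. M n \<subseteq> F k"
    and complete: "filt_complete M"
  shows "filt_complete F"
  unfolding filt_complete_def
proof (intro allI impI)
  have F_add: "x + y \<in> F k" if "x \<in> F k" "y \<in> F k" for k x y
    using F_diff[OF that(1) F_diff[OF F_0 that(2)]] by simp
  obtain NF where NF: "\<And>k n. NF k \<le> n \<Longrightarrow> F n \<subseteq> M k"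
    using F_M unfolding eventually_sequentially by metis
  obtain NM where NM: "\<And>k n. NM k \<le> n \<Longrightarrow> M n \<subseteq> F k"
    using M_F unfolding eventually_sequentially by metis
  obtain r where "mono r" and r: "\<And>k. max (NF k) k \<le> r k"
    using exists_mono_majorant[of "\<lambda>k. max (NF k) k"] by blast
  fix x :: "nat \<Rightarrow> 'a"
  assume cauchy: "\<forall>k j. k \<le> j \<longrightarrow> x j - x k \<in> F k"
  have "x (r j) - x (r k) \<in> M k" if "k \<le> j" for k j
  proof -
    have "x (r j) - x (r k) \<in> F (r k)"
      using cauchy monoD[OF \<open>mono r\<close> that] by blast
    moreover have "F (r k) \<subseteq> M k"
      using NF r[of k] by simp
    ultimately show ?thesis by blast
  qed
  then have "\<exists>!a. \<forall>k. a - x (r k) \<in> M k"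
    using complete[unfolded filt_complete_def, rule_format, of "\<lambda>k. x (r k)"] by blast
  then obtain a where a: "\<And>k. a - x (r k) \<in> M k" by blast
  have limit: "a - x k \<in> F k" for k
  proof -
    define j where "j = max (NM k) k"
    have "a - x (r j) \<in> F k"
      using a[of j] NM[of k j] unfolding j_def by auto
    moreover have "x (r j) - x k \<in> F k"
      using cauchy r[of j] unfolding j_def by auto
    ultimately have "(a - x (r j)) + (x (r j) - x k) \<in> F k"
      by (rule F_add)
    then show ?thesis by simp
  qed
  show "\<exists>!a. \<forall>k. a - x k \<in> F k"
  proof (rule ex1I)
    show "\<forall>k. a - x k \<in> F k" using limit by blast
    fix b assume b: "\<forall>k. b - x k \<in> F k"
    have "b - a \<in> M k" for k
      using F_diff[OF b[rule_format, of "NF k"] limit[of "NF k"]] NF[of k "NF k"] by auto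
    then have "b - a = 0" by (rule filt_complete_separated[OF complete M_0])
    then show "b = a" by simp
  qed
qed

lemma filt_complete_cong:
  fixes F M :: "nat \<Rightarrow> 'a::ring_1 set"
  assumes "\<And>k. 0 \<in> F k" "\<And>k x y. x \<in> F k \<Longrightarrow> y \<in> F k \<Longrightarrow> x - y \<in> F k"
    and "\<And>k. 0 \<in> M k" "\<And>k x y. x \<in> M k \<Longrightarrow> y \<in> M k \<Longrightarrow> x - y \<in> M k"
    and "\<And>k. \<forall>\<^sub>F n in sequentially. F n \<subseteq> M k"
    and "\<And>k. \<forall>\<^sub>F n in sequentially. M n \<subseteq> F k"
  shows "filt_complete F \<longleftrightarrow> filt_complete M"
  using filt_complete_if_cofinal[of F M] filt_complete_if_cofinal[of M F] assms by blast

lemma ex_filt_zero_cong: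
  assumes "\<And>k. 0 \<in> F k" "\<And>k. 0 \<in> M k"
    and "\<And>k. \<forall>\<^sub>F n in sequentially. F n \<subseteq> M k"
    and "\<And>k. \<forall>\<^sub>F n in sequentially. M n \<subseteq> F k"
  shows "(\<exists>N. F N = {0}) \<longleftrightarrow> (\<exists>N. M N = {0})"
  using assms unfolding eventually_sequentially by (metis order.refl subset_singletonD empty_iff)

abbreviation comm :: "'a::ring \<Rightarrow> 'a \<Rightarrow> 'a" where
  "comm x y \<equiv> x * y - y * x"

definition sandwiches :: "'a::monoid_mult set \<Rightarrow> 'a set" where
  "sandwiches S = {a * c * b | a b c. c \<in> S}"

lemma sum_list_le_length_plus_count:
  fixes "is" :: "nat list"
  assumes "\<forall>i\<in>set is. 1 \<le> i \<and> i \<le> K + 1"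
  shows "sum_list is \<le> length is + K * length (filter (\<lambda>i. 2 \<le> i) is)"
  using assms by (induction "is") auto

locale assoc_alg = vector_space scale
  for scale :: "'k::field \<Rightarrow> 'a::ring_1 \<Rightarrow> 'a" (infixr \<open>*s\<close> 75) +
  assumes scale_mult_left: "c *s (x * y) = (c *s x) * y"
    and scale_mult_right: "c *s (x * y) = x * (c *s y)"
begin

abbreviation L where "L \<equiv> LCS scale"
abbreviation M where "M \<equiv> Mser scale"

definition ideal :: "'a set \<Rightarrow> bool" where
  "ideal I \<longleftrightarrow> subspace I \<and> (\<forall>x\<in>I. \<forall>a. a * x \<in> I \<and> x * a \<in> I)"

lemma ideal_subspace: "ideal I \<Longrightarrow> subspace I"
  and ideal_mult_left: "ideal I \<Longrightarrow> x \<in> I \<Longrightarrow> a * x \<in> I"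
  and ideal_mult_right: "ideal I \<Longrightarrow> x \<in> I \<Longrightarrow> x * a \<in> I"
  by (simp_all add: ideal_def)

lemma ideal_prod_list:
  assumes I: "ideal I" and "y \<in> set ys" and "y \<in> I"
  shows "prod_list ys \<in> I"
proof -
  obtain us vs where "ys = us @ y # vs" using split_list[OF assms(2)] by blast
  then have "prod_list ys = prod_list us * (y * prod_list vs)" by simp
  then show ?thesis using ideal_mult_left[OF I ideal_mult_right[OF I \<open>y \<in> I\<close>]] by simp
qed

lemma span_map_subspace:
  assumes "x \<in> span S" and W: "subspace W"
    and "\<And>s. s \<in> S \<Longrightarrow> f s \<in> W"
    and add: "\<And>x y. f (x + y) = f x + f y"
    and scale: "\<And>c x. f (c *s x) = c *s f x"
  shows "f x \<in> W"
proof -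
  have "f 0 = 0" using scale[of 0 0] by simp
  then have "subspace {x. f x \<in> W}"
    using W add scale by (auto simp: subspace_def)
  then show ?thesis using span_induct[of x S "\<lambda>x. f x \<in> W"] assms(1,3) by blast
qed

lemma span_mult_subspace:
  assumes x: "x \<in> span S" and y: "y \<in> span T" and W: "subspace W"
    and "\<And>s t. s \<in> S \<Longrightarrow> t \<in> T \<Longrightarrow> s * t \<in> W"
  shows "x * y \<in> W"
proof -
  have "s * y \<in> W" if "s \<in> S" for s
    by (rule span_map_subspace[OF y W])
       (use assms(4) that in \<open>auto simp: distrib_left scale_mult_right\<close>)
  then show ?thesis
    by (rule span_map_subspace[OF x W]) (auto simp: distrib_right scale_mult_left)
qed

lemma ideal_span_sandwiches: "ideal (span (sandwiches S))"
  unfolding ideal_def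
proof (intro conjI ballI allI subspace_span)
  have closed: "c * s \<in> sandwiches S \<and> s * c \<in> sandwiches S" if s: "s \<in> sandwiches S" for s c
  proof -
    obtain a x b where "s = a * x * b" and "x \<in> S"
      using s unfolding sandwiches_def by blast
    then have "c * s = (c * a) * x * b" and "s * c = a * x * (b * c)"
      by (simp_all add: mult.assoc)
    then show ?thesis using \<open>x \<in> S\<close> unfolding sandwiches_def by blast
  qed
  fix x c assume x: "x \<in> span (sandwiches S)"
  show "c * x \<in> span (sandwiches S)"
    by (rule span_map_subspace[OF x subspace_span])
       (use closed in \<open>auto intro: span_base simp: distrib_left scale_mult_right\<close>)
  show "x * c \<in> span (sandwiches S)"
    by (rule span_map_subspace[OF x subspace_span])
       (use closed in \<open>auto intro: span_base simp: distrib_right scale_mult_left\<close>)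
qed

lemma subset_span_sandwiches: "S \<subseteq> span (sandwiches S)"
proof
  fix x assume "x \<in> S"
  moreover have "x = 1 * x * 1" by simp
  ultimately have "x \<in> sandwiches S" unfolding sandwiches_def by blast
  then show "x \<in> span (sandwiches S)" by (rule span_base)
qed

lemma span_sandwiches_subset_ideal: "ideal J \<Longrightarrow> S \<subseteq> J \<Longrightarrow> span (sandwiches S) \<subseteq> J"
  unfolding sandwiches_def ideal_def by (rule span_minimal) auto

lemma Mser_eq_span_sandwiches: "M k = span (sandwiches (L k))"
  unfolding Mser_def sandwiches_def by (rule arg_cong[where f = span]) blast

lemma ideal_M: "ideal (M k)"
  unfolding Mser_eq_span_sandwiches by (rule ideal_span_sandwiches)

lemma subspace_M: "subspace (M k)"
  and M_mult_left: "x \<in> M k \<Longrightarrow> a * x \<in> M k"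
  and M_mult_right: "x \<in> M k \<Longrightarrow> x * a \<in> M k"
  using ideal_M ideal_subspace ideal_mult_left ideal_mult_right by blast+

lemma M_add: "x \<in> M k \<Longrightarrow> y \<in> M k \<Longrightarrow> x + y \<in> M k"
  and M_diff: "x \<in> M k \<Longrightarrow> y \<in> M k \<Longrightarrow> x - y \<in> M k"
  by (simp_all add: subspace_add subspace_diff subspace_M)

lemma LCS_1 [simp]: "L 1 = UNIV" "L (Suc 0) = UNIV"
  by simp_all

lemma LCS_Suc: "i \<ge> 1 \<Longrightarrow> L (Suc i) = span {comm a l | a l. l \<in> L i}"
  by simp

lemma subspace_LCS: "subspace (L k)"
  by (cases k) auto

lemma LCS_2: "L 2 = span {comm a l | a l. l \<in> L 1}"
  and LCS_3: "L 3 = span {comm a l | a l. l \<in> L 2}"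
  by (simp_all add: numeral_3_eq_3 numeral_2_eq_2)

declare LCS.simps [simp del]

lemma comm_in_LCS: "i \<ge> 1 \<Longrightarrow> l \<in> L i \<Longrightarrow> comm a l \<in> L (Suc i)"
  by (auto simp: LCS_Suc intro!: span_base)

lemma comm_in_LCS': "i \<ge> 1 \<Longrightarrow> l \<in> L i \<Longrightarrow> comm l a \<in> L (Suc i)"
  using subspace_neg[OF subspace_LCS comm_in_LCS[of i l a]] by simp

lemma comm_in_LCS_2: "comm a b \<in> L 2"
  using comm_in_LCS[of 1 b a] by (simp add: numeral_2_eq_2)

lemma comm_in_LCS_3: "l \<in> L 2 \<Longrightarrow> comm a l \<in> L 3"
  and comm_in_LCS_3': "l \<in> L 2 \<Longrightarrow> comm l a \<in> L 3"
  using comm_in_LCS[of 2 l a] comm_in_LCS'[of 2 l a] by (simp_all add: numeral_3_eq_3)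

lemma LCS_Suc_subset: "L (Suc n) \<subseteq> L n"
proof (induction n rule: less_induct)
  case (less n)
  show ?case
  proof (cases "n \<le> 1")
    case True
    then show ?thesis by (cases n) (auto simp: LCS.simps)
  next
    case False
    then obtain m where "n = Suc m" and "m \<ge> 1" by (cases n) auto
    then show ?thesis
      using less[of m] by (auto simp: LCS_Suc intro!: span_mono)
  qed
qed

lemma LCS_antimono: "j \<le> k \<Longrightarrow> L k \<subseteq> L j"
  by (induction k rule: dec_induct) (use LCS_Suc_subset in blast)+

lemma LCS_subset_M: "L k \<subseteq> M k"
  unfolding Mser_eq_span_sandwiches by (rule subset_span_sandwiches)

lemma M_antimono: "j \<le> k \<Longrightarrow> M k \<subseteq> M j"
  unfolding Mser_def by (rule span_mono) (use LCS_antimono in blast)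

lemma M_1: "M 1 = UNIV"
  using LCS_subset_M[of 1] by auto

lemma M_Suc_subset_NCfilt: "M (Suc k) \<subseteq> NCfilt scale k"
proof
  fix x assume "x \<in> M (Suc k)"
  then have "prod_list [x] \<in> {prod_list xs |xs is. 1 \<le> length is \<and> length xs = length is \<and>
      (\<forall>j\<in>set is. 1 \<le> j) \<and> sum_list is = k + length is \<and> (\<forall>j<length is. xs ! j \<in> M (is ! j))}"
    by (intro CollectI exI[of _ "[x]"] exI[of _ "[Suc k]"]) simp
  then show "x \<in> NCfilt scale k" unfolding NCfilt_def by (auto intro: span_base)
qed

lemma eventually_M_subset_NCfilt: "\<forall>\<^sub>F n in sequentially. M n \<subseteq> NCfilt scale k"
  unfolding eventually_sequentially using M_antimono M_Suc_subset_NCfilt by blast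

lemma subspace_NCfilt: "subspace (NCfilt scale k)"
  unfolding NCfilt_def by simp

lemma comm_comm_in_M:
  assumes i: "i \<ge> 1" and m: "m \<in> L i"
  shows "comm (comm a X) m \<in> M (Suc (Suc i))"
proof -
  have "comm (comm a X) m = comm a (comm X m) + comm (comm a m) X"
    by (simp add: algebra_simps)
  also have "\<dots> \<in> L (Suc (Suc i))"
    using comm_in_LCS[OF _ comm_in_LCS[OF i m]] comm_in_LCS'[OF _ comm_in_LCS[OF i m]]
    by (intro subspace_add[OF subspace_LCS]) simp_all
  finally show ?thesis using LCS_subset_M by blast
qed

lemma comm_LCS_2_in_M:
  assumes i: "i \<ge> 1" and m: "m \<in> L i" and z: "z \<in> L 2"
  shows "comm z m \<in> M (Suc (Suc i))"
  using z[unfolded LCS_2]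
proof (rule span_map_subspace[OF _ subspace_M])
  show "comm s m \<in> M (Suc (Suc i))" if "s \<in> {comm a l |a l. l \<in> L 1}" for s
    using that comm_comm_in_M[OF i m] by blast
qed (simp_all add: algebra_simps scale_mult_left[symmetric] scale_mult_right[symmetric]
                   scale_right_diff_distrib)

lemma comm_mult_comm_in_M:
  assumes i: "i \<ge> 1" and m: "m \<in> L i" and z: "z \<in> L 2"
  shows "comm u m * comm a z \<in> M (Suc (Suc i))"
proof -
  let ?d = "\<lambda>X. comm X m"
  have "comm u m * comm a z =
      ?d (comm a (u * z)) - ?d (comm a u) * z - comm a u * ?d z - u * ?d (comm a z)"
    by (simp add: algebra_simps)
  also have "\<dots> \<in> M (Suc (Suc i))"
    using M_diff[OF M_diff[OF M_diff[OF comm_comm_in_M[OF i m]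
          M_mult_right[OF comm_comm_in_M[OF i m]]] M_mult_left[OF comm_LCS_2_in_M[OF i m z]]]
          M_mult_left[OF comm_comm_in_M[OF i m]]] .
  finally show ?thesis .
qed

lemma LCS_Suc_mult_LCS_3:
  assumes i: "i \<ge> 1" and l: "l \<in> L (Suc i)" and w: "w \<in> L 3"
  shows "l * w \<in> M (Suc (Suc i))"
proof -
  have "l \<in> span {comm a l | a l. l \<in> L i}" using l i by (simp add: LCS_Suc)
  moreover have "w \<in> span {comm a l | a l. l \<in> L 2}" using w by (simp add: LCS_3)
  ultimately show ?thesis
    by (rule span_mult_subspace[OF _ _ subspace_M]) (auto intro: comm_mult_comm_in_M[OF i])
qed

lemma M_Suc_mult_M_3:
  assumes i: "i \<ge> 1" and x: "x \<in> M (Suc i)" and y: "y \<in> M 3"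
  shows "x * y \<in> M (Suc (Suc i))"
proof -
  have lcw: "l * c * w \<in> M (Suc (Suc i))" if l: "l \<in> L (Suc i)" and w: "w \<in> L 3" for l c w
  proof -
    have "l * c * w = c * (l * w) + comm l c * w" by (simp add: algebra_simps)
    also have "\<dots> \<in> M (Suc (Suc i))"
      using comm_in_LCS'[of "Suc i" l c] i l
      by (intro M_add[OF M_mult_left[OF LCS_Suc_mult_LCS_3[OF i l w]]] M_mult_right
          subsetD[OF LCS_subset_M]) simp
    finally show ?thesis .
  qed
  show ?thesis
    using x[unfolded Mser_eq_span_sandwiches] y[unfolded Mser_eq_span_sandwiches]
  proof (rule span_mult_subspace[OF _ _ subspace_M])
    fix s t assume "s \<in> sandwiches (L (Suc i))" "t \<in> sandwiches (L 3)"
    then obtain a l b a' w b' where s: "s = a * l * b" "l \<in> L (Suc i)"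
      and t: "t = a' * w * b'" "w \<in> L 3" unfolding sandwiches_def by blast
    have "s * t = a * (l * (b * a') * w) * b'" unfolding s t by (simp add: mult.assoc)
    then show "s * t \<in> M (Suc (Suc i))"
      using M_mult_right[OF M_mult_left[OF lcw[OF s(2) t(2)]]] by simp
  qed
qed

text \<open>Two factors of the product share the same middle c, which exhibits a factor c z c.\<close>

lemma prod_list_sandwiches_in_ideal:
  assumes I: "ideal I" and "finite S" and "\<And>c z. c \<in> S \<Longrightarrow> c * z * c \<in> I"
    and "set ys \<subseteq> sandwiches S" and "card S < length ys"
  shows "prod_list ys \<in> I"
  using assms(2-)
proof (induction ys arbitrary: S)
  case Nil
  then show ?case by simp
next
  case (Cons y ys)
  obtain a b c where y: "y = a * c * b" and c: "c \<in> S"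
    using Cons.prems(3) unfolding sandwiches_def by auto
  show ?case
  proof (cases "set ys \<subseteq> sandwiches (S - {c})")
    case True
    have "card (S - {c}) < length ys"
      using Cons.prems(1,4) c card_gt_0_iff[of S] by (auto simp: card_Diff_singleton)
    then have "prod_list ys \<in> I"
      using Cons.IH[of "S - {c}"] Cons.prems(1,2) True by auto
    then show ?thesis using ideal_mult_left[OF I] by simp
  next
    case False
    then obtain y' where y'_in: "y' \<in> set ys" and "y' \<notin> sandwiches (S - {c})" by blast
    moreover have "y' \<in> sandwiches S" using Cons.prems(3) y'_in by auto
    ultimately obtain a' b' where y': "y' = a' * c * b'" unfolding sandwiches_def by blast
    obtain us vs where ys: "ys = us @ y' # vs" using split_list[OF y'_in] by blast
    have "prod_list (y # ys) = a * (c * (b * prod_list us * a') * c) * (b' * prod_list vs)"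
      unfolding ys y y' by (simp add: mult.assoc)
    then show ?thesis
      using ideal_mult_right[OF I ideal_mult_left[OF I Cons.prems(2)[OF c]]] by simp
  qed
qed

lemma prod_list_span_in_subspace:
  assumes "set xs \<subseteq> span S" and "subspace W"
    and "\<And>ys. set ys \<subseteq> S \<Longrightarrow> length ys = length xs \<Longrightarrow> prod_list ys \<in> W"
  shows "prod_list xs \<in> W"
  using assms
proof (induction xs arbitrary: W)
  case Nil
  then show ?case by simp
next
  case (Cons x xs)
  have "g * prod_list xs \<in> W" if g: "g \<in> S" for g
  proof -
    have "subspace {w. g * w \<in> W}"
      using Cons.prems(2) by (auto simp: subspace_def distrib_left scale_mult_right[symmetric])
    moreover have "prod_list ys \<in> {w. g * w \<in> W}" if "set ys \<subseteq> S" "length ys = length xs" for ys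
      using Cons.prems(3)[of "g # ys"] g that by simp
    ultimately show ?thesis using Cons.IH[of "{w. g * w \<in> W}"] Cons.prems(1) by simp
  qed
  moreover have "x \<in> span S" using Cons.prems(1) by simp
  ultimately show ?case
    by (auto intro: span_map_subspace[OF _ Cons.prems(2), of x S "\<lambda>x. x * prod_list xs"]
             simp: distrib_right scale_mult_left)
qed

lemma comm_in_ideal_gen_subalg:
  assumes J: "ideal J" and x: "x \<in> gen_subalg scale G" and y: "y \<in> Y"
    and comm_gens: "\<And>g y. g \<in> G \<Longrightarrow> y \<in> Y \<Longrightarrow> comm g y \<in> J"
  shows "comm x y \<in> J"
  using x
proof (induction x rule: gen_subalg.induct)
  case (gen g)
  then show ?case using comm_gens y by blast
next
  case one
  then show ?case using subspace_0[OF ideal_subspace[OF J]] by simp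
next
  case (add x z)
  have "comm (x + z) y = comm x y + comm z y" by (simp add: algebra_simps)
  then show ?case using subspace_add[OF ideal_subspace[OF J] add.IH] by simp
next
  case (mult x z)
  have "comm (x * z) y = x * comm z y + comm x y * z" by (simp add: algebra_simps)
  then show ?case
    using subspace_add[OF ideal_subspace[OF J]
        ideal_mult_left[OF J mult.IH(2)] ideal_mult_right[OF J mult.IH(1)]] by simp
next
  case (smult x c)
  have "comm (c *s x) y = c *s comm x y"
    by (simp add: scale_mult_left[symmetric] scale_mult_right[symmetric] scale_right_diff_distrib)
  then show ?case using subspace_scale[OF ideal_subspace[OF J] smult.IH] by simp
qed

lemma prod_list_regroup:
  assumes I: "ideal I" and "\<forall>p\<in>set ps. P p \<longrightarrow> f p \<in> I" and "filter P ps \<noteq> []"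
  shows "\<exists>ys. length ys = length (filter P ps) \<and> set ys \<subseteq> I \<and> prod_list ys = prod_list (map f ps)"
  using assms(2,3)
proof (induction ps)
  case Nil
  then show ?case by simp
next
  case (Cons p ps)
  show ?case
  proof (cases "P p")
    case True
    show ?thesis
    proof (cases "filter P ps = []")
      case True
      have "f p * prod_list (map f ps) \<in> I"
        using Cons.prems \<open>P p\<close> ideal_mult_right[OF I] by auto
      then show ?thesis using True \<open>P p\<close> by (intro exI[of _ "[f p * prod_list (map f ps)]"]) simp
    next
      case False
      then obtain ys where "length ys = length (filter P ps)" "set ys \<subseteq> I"
        "prod_list ys = prod_list (map f ps)" using Cons by auto
      then show ?thesis using \<open>P p\<close> Cons.prems by (intro exI[of _ "f p # ys"]) auto
    qed
  next
    case False
    then obtain ys where ys: "length ys = length (filter P ps)" "set ys \<subseteq> I"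
      "prod_list ys = prod_list (map f ps)" using Cons by auto
    then obtain y ys' where yy: "ys = y # ys'" using Cons.prems(2) False by (cases ys) auto
    have "f p * y \<in> I" using ys(2) yy ideal_mult_left[OF I] by auto
    then show ?thesis using False ys yy by (intro exI[of _ "f p * y # ys'"]) (auto simp: mult.assoc)
  qed
qed

context
  assumes two_nonzero: "(2::'k) \<noteq> 0"
begin

lemma comm_square_in_M_3: "comm x y * comm x y \<in> M 3"
proof -
  let ?c = "comm x y"
  have "comm x (comm x (y * y)) \<in> L 3" "comm x ?c \<in> L 3"
    using comm_in_LCS_3 comm_in_LCS_2 by blast+
  then have A: "comm x (comm x (y * y)) \<in> M 3" and B: "comm x ?c \<in> M 3"
    using LCS_subset_M by auto
  have "comm x (comm x (y * y)) - comm x ?c * y - y * comm x ?c \<in> M 3"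
    by (rule M_diff[OF M_diff[OF A M_mult_right[OF B]] M_mult_left[OF B]])
  moreover have "(2::'k) *s (?c * ?c) = comm x (comm x (y * y)) - comm x ?c * y - y * comm x ?c"
    using scale_left_distrib[of 1 1 "?c * ?c"] by (simp add: algebra_simps)
  ultimately have "inverse (2::'k) *s (2::'k) *s (?c * ?c) \<in> M 3"
    using subspace_scale[OF subspace_M] by simp
  then show ?thesis using two_nonzero by simp
qed

lemma comm_sandwich_in_M_3: "comm x y * z * comm x y \<in> M 3"
proof -
  let ?c = "comm x y"
  have "?c * z * ?c = z * (?c * ?c) + comm ?c z * ?c" by (simp add: algebra_simps)
  also have "\<dots> \<in> M 3"
    by (rule M_add[OF M_mult_left[OF comm_square_in_M_3]
          M_mult_right[OF subsetD[OF LCS_subset_M comm_in_LCS_3'[OF comm_in_LCS_2]]]])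
  finally show ?thesis .
qed

context
  fixes G assumes finite_G: "finite G" and generates_G: "gen_subalg scale G = UNIV"
begin

abbreviation gen_comms :: "'a set" where
  "gen_comms \<equiv> {comm g h | g h. g \<in> G \<and> h \<in> G}"

lemma finite_gen_comms: "finite gen_comms"
proof -
  have "gen_comms = (\<lambda>(g, h). comm g h) ` (G \<times> G)" by auto
  then show ?thesis using finite_G by simp
qed

text \<open>Commutators with a generator lie in the ideal J generated by gen_comms, and then so
  do all commutators: each time by induction over the subalgebra generated by G.\<close>

lemma M_2_subset_ideal_gen_comms: "M 2 \<subseteq> span (sandwiches gen_comms)"
proof -
  let ?J = "span (sandwiches gen_comms)"
  have comm_g_h: "comm g h \<in> ?J" if "g \<in> G" "h \<in> G" for g h
  proof -
    have "comm g h \<in> gen_comms" using that by blast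
    then show ?thesis by (rule subsetD[OF subset_span_sandwiches])
  qed
  have comm_x_g: "comm x g \<in> ?J" if "g \<in> G" for x g
    by (rule comm_in_ideal_gen_subalg[where G = G, OF ideal_span_sandwiches _ that])
       (simp_all add: generates_G comm_g_h)
  have comm_g_y: "comm g y \<in> ?J" if "g \<in> G" for g y
    using span_neg[OF comm_x_g[OF that, of y]] by simp
  have "comm x y \<in> ?J" for x y
    by (rule comm_in_ideal_gen_subalg[where G = G, OF ideal_span_sandwiches _ UNIV_I])
       (simp_all add: generates_G comm_g_y)
  then have "L 2 \<subseteq> ?J"
    unfolding LCS_2 by (intro span_minimal subspace_span) auto
  then show ?thesis
    unfolding Mser_eq_span_sandwiches by (rule span_sandwiches_subset_ideal[OF ideal_span_sandwiches])
qed

lemma prod_list_M_2_in_M_3: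
  assumes "set xs \<subseteq> M 2" and "card gen_comms < length xs"
  shows "prod_list xs \<in> M 3"
proof (rule prod_list_span_in_subspace[OF _ subspace_M])
  show "set xs \<subseteq> span (sandwiches gen_comms)"
    using assms(1) M_2_subset_ideal_gen_comms by blast
  show "prod_list ys \<in> M 3" if "set ys \<subseteq> sandwiches gen_comms" "length ys = length xs" for ys
    using prod_list_sandwiches_in_ideal[OF ideal_M finite_gen_comms _ that(1)] comm_sandwich_in_M_3
      assms(2) that(2) by auto
qed

lemma prod_list_M_2_in_M:
  assumes "set xs \<subseteq> M 2" and "(card gen_comms + 1) * d < length xs"
  shows "prod_list xs \<in> M (d + 2)"
  using assms
proof (induction d arbitrary: xs)
  case 0
  then obtain y where "y \<in> set xs" by (cases xs) auto
  then have "prod_list xs \<in> M 2" using ideal_prod_list[OF ideal_M, of y xs 2] 0 by auto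
  then show ?case by (simp add: numeral_2_eq_2)
next
  case (Suc d)
  define n where "n = length xs - (card gen_comms + 1)"
  have "prod_list (take n xs) \<in> M (Suc (d + 1))"
    using Suc.IH[of "take n xs"] Suc.prems set_take_subset[of n xs] unfolding n_def by auto
  moreover have "prod_list (drop n xs) \<in> M 3"
    using prod_list_M_2_in_M_3[of "drop n xs"] Suc.prems set_drop_subset[of n xs]
    unfolding n_def by auto
  ultimately have "prod_list (take n xs) * prod_list (drop n xs) \<in> M (Suc d + 2)"
    using M_Suc_mult_M_3[of "d + 1"] by simp
  then show ?case
    using prod_list.append[of "take n xs" "drop n xs"] by simp
qed

text \<open>A product in NCfilt n without a factor in M (d + 2) has all indices \<le> d + 1, so the
  excess n = \<Sum>(i_j - 1) forces more than n / d factors in M 2; the other factors are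
  absorbed into their neighbours.\<close>

lemma NCfilt_subset_M:
  assumes n: "d * ((card gen_comms + 1) * d) < n"
  shows "NCfilt scale n \<subseteq> M (d + 2)"
  unfolding NCfilt_def
proof (rule span_minimal[OF _ subspace_M], rule subsetI)
  fix x assume "x \<in> {prod_list xs |xs is. 1 \<le> length is \<and> length xs = length is \<and>
      (\<forall>j\<in>set is. 1 \<le> j) \<and> sum_list is = n + length is \<and> (\<forall>j<length is. xs ! j \<in> M (is ! j))}"
  then obtain xs "is" where x: "x = prod_list xs" and len: "length xs = length is"
    and pos: "\<forall>j\<in>set is. 1 \<le> j" and sum: "sum_list is = n + length is"
    and mem: "\<forall>j<length is. xs ! j \<in> M (is ! j)" by blast
  show "x \<in> M (d + 2)"
  proof (cases "\<exists>j<length is. d + 2 \<le> is ! j")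
    case True
    then obtain j where "j < length is" "d + 2 \<le> is ! j" by blast
    then have "xs ! j \<in> M (d + 2)" "xs ! j \<in> set xs" using mem M_antimono len by auto
    then show ?thesis unfolding x using ideal_prod_list[OF ideal_M] by blast
  next
    case False
    define ps where "ps = zip xs is"
    have ps: "map fst ps = xs" "map snd ps = is" unfolding ps_def using len by auto
    have "\<forall>i\<in>set is. 1 \<le> i \<and> i \<le> d + 1"
      using False pos by (fastforce simp: in_set_conv_nth)
    from sum_list_le_length_plus_count[OF this]
    have "n \<le> d * length (filter (\<lambda>i. 2 \<le> i) is)" using sum by simp
    then have "d * ((card gen_comms + 1) * d) < d * length (filter (\<lambda>i. 2 \<le> i) is)"
      using n by linarith
    moreover have "length (filter (\<lambda>i. 2 \<le> i) is) = length (filter (\<lambda>p. 2 \<le> snd p) ps)"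
      unfolding ps(2)[symmetric] by (simp add: filter_map comp_def)
    ultimately have many: "(card gen_comms + 1) * d < length (filter (\<lambda>p. 2 \<le> snd p) ps)"
      by (simp only: mult_less_cancel1)
    have "\<forall>p\<in>set ps. 2 \<le> snd p \<longrightarrow> fst p \<in> M 2"
      using mem M_antimono unfolding ps_def by (auto simp: set_zip)
    moreover have "filter (\<lambda>p. 2 \<le> snd p) ps \<noteq> []" using many by auto
    ultimately have "\<exists>ys. length ys = length (filter (\<lambda>p. 2 \<le> snd p) ps) \<and> set ys \<subseteq> M 2 \<and>
        prod_list ys = prod_list (map fst ps)"
      by (rule prod_list_regroup[OF ideal_M])
    then obtain ys where "length ys = length (filter (\<lambda>p. 2 \<le> snd p) ps)"
      and "set ys \<subseteq> M 2" and "prod_list ys = x"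
      unfolding ps(1) x by blast
    then show ?thesis
      using prod_list_M_2_in_M[of ys d] many by simp
  qed
qed

lemma eventually_NCfilt_subset_M: "\<forall>\<^sub>F n in sequentially. NCfilt scale n \<subseteq> M k"
proof (cases "2 \<le> k")
  case True
  then obtain d where "k = d + 2" by (metis le_add_diff_inverse2)
  then show ?thesis
    unfolding eventually_sequentially using NCfilt_subset_M[of d] by (meson Suc_le_lessD)
next
  case False
  then have "M k = UNIV" using M_1 M_antimono[of k 1] by auto
  then show ?thesis by simp
qed

end

end

end

theorem claim2p4:
  fixes scale :: "'k::field_char_0 \<Rightarrow> 'a::ring_1 \<Rightarrow> 'a"
  assumes "assoc_algebra scale"
    and "fin_gen_algebra scale"
  shows "(NC_complete scale \<longleftrightarrow> Lie_complete scale) \<and>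
         (NC_nilpotent scale \<longleftrightarrow> Lie_nilpotent scale)"
proof -
  interpret assoc_alg scale
    using assms(1) unfolding assoc_algebra_def assoc_alg_def assoc_alg_axioms_def by auto
  obtain G where "finite G" and "gen_subalg scale G = UNIV"
    using assms(2) unfolding fin_gen_algebra_def by blast
  then have NCfilt_M: "\<And>k. \<forall>\<^sub>F n in sequentially. NCfilt scale n \<subseteq> Mser scale k"
    using eventually_NCfilt_subset_M[of G] by simp
  have "NC_complete scale \<longleftrightarrow> Lie_complete scale"
    unfolding NC_complete_def Lie_complete_def
    by (rule filt_complete_cong[OF _ _ _ _ NCfilt_M eventually_M_subset_NCfilt])
       (simp_all add: subspace_0 subspace_diff subspace_NCfilt subspace_M)
  moreover have "NC_nilpotent scale \<longleftrightarrow> Lie_nilpotent scale"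
    unfolding NC_nilpotent_def Lie_nilpotent_def
    by (rule ex_filt_zero_cong[OF _ _ NCfilt_M eventually_M_subset_NCfilt])
       (simp_all add: subspace_0 subspace_NCfilt subspace_M)
  ultimately show ?thesis ..
qed

end
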